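(* In the setting of the context, let $X^{m,s}$ be a diffusion and suppose $u_{m,s}(x,\theta)$ is strictly supermodular and twice continuously differentiable. If $\psi_{m,s}$ is $u_{m,s}$-subdifferentiable, then the indifference index $\theta^*$ satisfies, at $x\in\mathrm{int}(I^m)$ (where $\psi_{m,s}$ is differentiable), $\psi_{m,s}'(x)=\frac{\partial}{\partial x}u_{m,s}(x,\theta^*(x))$. Moreover, $\theta^*$ is non-decreasing.
   Context: Fix $\rho>0$, an interval $\Theta$, a starting point $X_0$, a terminal reward $G(x,\theta)$ and a running reward $c(x)$. For a speed measure $m$ and a strictly increasing continuous scale function $s$, $X^{m,s}$ denotes the regular one-dimensional generalised diffusion with speed measure $m$ and scale $s$ on its state space $I^m$ started at $X_0$ (either both endpoints non-reflecting, or started at a reflecting endpoint with the other non-reflecting); $\mathrm{int}(I^m)$ is the interior plus accessible boundary points. $\varphi_{m,s}$ is the increasing positive solution of $\frac12\frac{d}{dm}\frac{d}{ds}f=\rho f$ with $\varphi_{m,s}(X_0)=1$, $\psi_{m,s}=\log\varphi_{m,s}$, $R_{m,s}(x)=\mathbb{E}_x[\int_0^\infty e^{-\rho t}c(X^{m,s}_t)dt]$, and $u_{m,s}(x,\theta)=\log(G(x,\theta)-R_{m,s}(x))$. For $f$ defined on $A$ and $u:A\times B\to\mathbb{R}$, the $u$-subdifferential of $f$ at $y$ is $\partial^uf(y)=\{z\in B:u(y,z)-f(y)\ge u(\hat y,z)-f(\hat y)\ \forall\hat y\in A\}$, and $f$ is $u$-subdifferentiable if $\partial^uf(y)\neq\emptyset$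 for all $y\in A$; here $A=\mathrm{int}(I^m)$, $B=\Theta$. Strict supermodularity of $u$: $u(y',z)-u(y,z)$ strictly increasing in $z$ for $y'>y$. The indifference index $\theta^*(x)$ is a parameter $\theta$ for which it is optimal to stop immediately when the diffusion starts at $x$, i.e. $\theta^*(x)\in\partial^{u_{m,s}}\psi_{m,s}(x)$ (so that $x$ maximises $x'\mapsto u_{m,s}(x',\theta)-\psi_{m,s}(x')$). *)

theory Defs
  imports "HOL-Analysis.Analysis"
begin

definition u_subdiff ::
  "(real \<Rightarrow> real \<Rightarrow> real) \<Rightarrow> real set \<Rightarrow> real set \<Rightarrow> (real \<Rightarrow> real) \<Rightarrow> real \<Rightarrow> real set" where
  "u_subdiff u A B f y =
     {z \<in> B. \<forall>yh \<in> A. u y z - f y \<ge> u yh z - f yh}"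

definition u_subdifferentiable ::
  "(real \<Rightarrow> real \<Rightarrow> real) \<Rightarrow> real set \<Rightarrow> real set \<Rightarrow> (real \<Rightarrow> real) \<Rightarrow> bool" where
  "u_subdifferentiable u A B f \<longleftrightarrow> (\<forall>y \<in> A. u_subdiff u A B f y \<noteq> {})"

definition strictly_supermodular ::
  "(real \<Rightarrow> real \<Rightarrow> real) \<Rightarrow> real set \<Rightarrow> real set \<Rightarrow> bool" where
  "strictly_supermodular u A B \<longleftrightarrow>
     (\<forall>y \<in> A. \<forall>y' \<in> A. \<forall>z \<in> B. \<forall>z' \<in> B.
        y < y' \<longrightarrow> z < z' \<longrightarrow> u y' z - u y z < u y' z' - u y z')"

definition C2_on :: "(real \<Rightarrow> real \<Rightarrow> real) \<Rightarrow> (real \<times> real) set \<Rightarrow> bool" where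
  "C2_on u S \<longleftrightarrow>
     (\<exists>ux uy uxx uxy uyx uyy :: real \<times> real \<Rightarrow> real.
        (\<forall>p \<in> S. ((\<lambda>q. u (fst q) (snd q)) has_derivative
                     (\<lambda>h. ux p * fst h + uy p * snd h)) (at p within S)) \<and>
        (\<forall>p \<in> S. (ux has_derivative (\<lambda>h. uxx p * fst h + uxy p * snd h)) (at p within S)) \<and>
        (\<forall>p \<in> S. (uy has_derivative (\<lambda>h. uyx p * fst h + uyy p * snd h)) (at p within S)) \<and>
        continuous_on S uxx \<and> continuous_on S uxy \<and>
        continuous_on S uyx \<and> continuous_on S uyy)"

end

theory Submission
  imports Defs
begin

text \<open>Monotonicity of the index is the usual exchange argument: adding the two optimality
  inequalities at x < y contradicts strict supermodularity when the parameters are in the wrong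
  order. At an interior point x, optimality of the parameter makes x a local maximum of
  y \<mapsto> u y (theta_star x) - psi y, so the two derivatives agree by Fermat's rule.\<close>

lemma u_subdiff_mono:
  assumes "strictly_supermodular u A B"
    and "x \<in> A" "y \<in> A" "x < y"
    and "z \<in> u_subdiff u A B f x" "z' \<in> u_subdiff u A B f y"
  shows "z \<le> z'"
proof (rule ccontr)
  assume "\<not> z \<le> z'"
  hence "z' < z" by simp
  have z: "z \<in> B" "u x z - f x \<ge> u y z - f y"
    and z': "z' \<in> B" "u y z' - f y \<ge> u x z' - f x"
    using assms(2,3,5,6) unfolding u_subdiff_def by auto
  have "u y z' - u x z' < u y z - u x z"
    using assms(1-4) z(1) z'(1) \<open>z' < z\<close> unfolding strictly_supermodular_def by blast
  with z(2) z'(2) show False by linarith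
qed

lemma deriv_eq_of_u_subdiff:
  assumes "z \<in> u_subdiff u A B f x" "x \<in> interior A"
    and "f differentiable (at x)" "(\<lambda>y. u y z) differentiable (at x)"
  shows "deriv f x = deriv (\<lambda>y. u y z) x"
proof -
  obtain df where df: "(f has_real_derivative df) (at x)"
    using assms(3) by (auto simp: real_differentiable_def)
  obtain du where du: "((\<lambda>y. u y z) has_real_derivative du) (at x)"
    using assms(4) by (auto simp: real_differentiable_def)
  obtain e where e: "e > 0" "ball x e \<subseteq> A"
    using assms(2) by (meson mem_interior)
  have opt: "\<forall>y\<in>A. u y z - f y \<le> u x z - f x"
    using assms(1) unfolding u_subdiff_def by auto
  have "du - df = 0"
  proof (rule DERIV_local_max[OF DERIV_diff[OF du df] e(1)])
    show "\<forall>y. \<bar>x - y\<bar> < e \<longrightarrow> u y z - f y \<le> u x z - f x"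
      using opt e(2) by (auto simp: dist_real_def subset_iff)
  qed
  thus ?thesis using DERIV_imp_deriv[OF df] DERIV_imp_deriv[OF du] by simp
qed

lemma has_real_derivative_partial_fst:
  assumes "((\<lambda>q. u (fst q) (snd q)) has_derivative (\<lambda>h. a * fst h + b * snd h))
             (at (x, z) within A \<times> B)"
    and "x \<in> interior A" "z \<in> B"
  shows "((\<lambda>y. u y z) has_real_derivative a) (at x)"
proof -
  have embed: "((\<lambda>y. (y, z)) has_derivative (\<lambda>h. (h, 0))) (at x within A)"
    by (intro derivative_eq_intros) auto
  have "(\<lambda>y. (y, z)) ` A \<subseteq> A \<times> B" using assms(3) by auto
  from diff_chain_within[OF embed has_derivative_subset[OF assms(1) this]]
  have "((\<lambda>y. u y z) has_derivative (\<lambda>h. a * h)) (at x within A)"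
    by (simp add: o_def)
  thus ?thesis
    using at_within_interior[OF assms(2)] by (simp add: has_field_derivative_def)
qed

lemma C2_on_partial_fst_differentiable:
  assumes "C2_on u (A \<times> B)" "x \<in> interior A" "z \<in> B"
  shows "(\<lambda>y. u y z) differentiable (at x)"
proof -
  obtain ux uy where "\<forall>p \<in> A \<times> B. ((\<lambda>q. u (fst q) (snd q)) has_derivative
                     (\<lambda>h. ux p * fst h + uy p * snd h)) (at p within A \<times> B)"
    using assms(1) unfolding C2_on_def by blast
  moreover have "x \<in> A" using assms(2) interior_subset by blast
  ultimately show ?thesis
    using has_real_derivative_partial_fst[OF _ assms(2,3)] assms(3)
    by (meson SigmaI real_differentiable_def)
qed

theorem corollary4p8:
  fixes u :: "real \<Rightarrow> real \<Rightarrow> real"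
    and psi :: "real \<Rightarrow> real"
    and A \<Theta> :: "real set"
    and theta_star :: "real \<Rightarrow> real"
  assumes A_int: "is_interval A"
    and Theta_int: "is_interval \<Theta>"
    and supermod: "strictly_supermodular u A \<Theta>"
    and C2: "C2_on u (A \<times> \<Theta>)"
    and subdiff: "u_subdifferentiable u A \<Theta> psi"
    and index: "\<forall>x \<in> A. theta_star x \<in> u_subdiff u A \<Theta> psi x"
  shows "(\<forall>x \<in> interior A. psi differentiable (at x) \<longrightarrow>
            deriv psi x = deriv (\<lambda>y. u y (theta_star x)) x)
         \<and> (\<forall>x \<in> A. \<forall>y \<in> A. x \<le> y \<longrightarrow> theta_star x \<le> theta_star y)"
proof (intro conjI ballI impI)
  fix x assume x: "x \<in> interior A" and "psi differentiable (at x)"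
  have "theta_star x \<in> u_subdiff u A \<Theta> psi x"
    using index x interior_subset by blast
  moreover have "theta_star x \<in> \<Theta>"
    using calculation unfolding u_subdiff_def by simp
  ultimately show "deriv psi x = deriv (\<lambda>y. u y (theta_star x)) x"
    using deriv_eq_of_u_subdiff C2_on_partial_fst_differentiable[OF C2 x]
      \<open>psi differentiable (at x)\<close> x by blast
next
  fix x y assume "x \<in> A" "y \<in> A" "x \<le> y"
  then consider "x = y" | "x < y" by linarith
  then show "theta_star x \<le> theta_star y"
  proof cases
    case 2
    then show ?thesis
      using u_subdiff_mono[OF supermod \<open>x \<in> A\<close> \<open>y \<in> A\<close>] index \<open>x \<in> A\<close> \<open>y \<in> A\<close> by blast
  qed simp
qed

end
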